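(* Let $Z\in\mathfrak X_S$ be as in the setup with $A=-2C$. Let $\gamma$ be a symmetric crossing periodic orbit whose crossing points with $\Sigma$ are $p_0=(x_0,y_0,0)$ and $p_1=(-y_0,-x_0,0)$, with $x_0y_0\neq 0$. Then its saltation-corrected monodromy matrix $M$ satisfies $$\det(M)=\Big(\frac{y_0}{x_0}\Big)^2.$$
   Context: Setup. Fix real parameters $A\neq 0$, $C$, $H$, $\Lambda$. Let $\Sigma=\{z=0\}$. Define $$X(x,y,z)=\big(Ax-H(((A-C)^2+1)z-\Lambda),\ \Lambda-(1+C^2)z,\ y+2Cz\big),$$ $$Y(x,y,z)=\big(-\Lambda-(1+C^2)z,\ Ay-H(((A-C)^2+1)z+\Lambda),\ x+2Cz\big).$$ $Z$ equals $X$ on $\{z\ge0\}$ and $Y$ on $\{z<0\}$ (family $\mathfrak X_S$, equivariant under $S(x,y,z)=(-y,-x,-z)$). On $\Sigma$, $X_3=y$ and $Y_3=x$. The periodic orbit runs from $p_0$ to $p_1$ along $X$ in time $t_X$, and from $p_1$ back to $p_0$ along $Y$ in time $t_Y$. Its saltation-corrected monodromy matrix is $$M=S_{Y\to X}(p_0)\,e^{DY t_Y}\,S_{X\to Y}(p_1)\,e^{DX t_X},$$ where $e_3=(0,0,1)^T$ and $$S_{X\to Y}(p)=I+\frac{(Y(p)-X(p))e_3^T}{X_3(p)},\qquad S_{Y\to X}(p)=I-\frac{(Y(p)-X(p))e_3^T}{Y_3(p)}.$$ *)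

theory Defs
  imports "HOL-Analysis.Analysis"
begin

definition Xf :: "real \<Rightarrow> real \<Rightarrow> real \<Rightarrow> real \<Rightarrow> real^3 \<Rightarrow> real^3" where
  "Xf A C H L p = vector [A * p$1 - H * (((A - C)^2 + 1) * p$3 - L),
                          L - (1 + C^2) * p$3,
                          p$2 + 2 * C * p$3]"

definition Yf :: "real \<Rightarrow> real \<Rightarrow> real \<Rightarrow> real \<Rightarrow> real^3 \<Rightarrow> real^3" where
  "Yf A C H L p = vector [- L - (1 + C^2) * p$3,
                          A * p$2 - H * (((A - C)^2 + 1) * p$3 + L),
                          p$1 + 2 * C * p$3]"

definition DX :: "real \<Rightarrow> real \<Rightarrow> real \<Rightarrow> real^3^3" where
  "DX A C H = vector [vector [A, 0, - H * ((A - C)^2 + 1)],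
                      vector [0, 0, - (1 + C^2)],
                      vector [0, 1, 2 * C]]"

definition DY :: "real \<Rightarrow> real \<Rightarrow> real \<Rightarrow> real^3^3" where
  "DY A C H = vector [vector [0, 0, - (1 + C^2)],
                      vector [0, A, - H * ((A - C)^2 + 1)],
                      vector [1, 0, 2 * C]]"

fun mpow :: "real^3^3 \<Rightarrow> nat \<Rightarrow> real^3^3" where
  "mpow M 0 = mat 1"
| "mpow M (Suc n) = M ** mpow M n"

definition mexp :: "real^3^3 \<Rightarrow> real^3^3" where
  "mexp M = (\<Sum>n. (1 / fact n) *\<^sub>R mpow M n)"

definition e3 :: "real^3" where "e3 = axis 3 1"

definition outer :: "real^3 \<Rightarrow> real^3 \<Rightarrow> real^3^3" where
  "outer u v = (\<chi> i j. u$i * v$j)"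

definition SaltXY :: "real \<Rightarrow> real \<Rightarrow> real \<Rightarrow> real \<Rightarrow> real^3 \<Rightarrow> real^3^3" where
  "SaltXY A C H L p = mat 1 + (1 / (Xf A C H L p)$3) *\<^sub>R outer (Yf A C H L p - Xf A C H L p) e3"

definition SaltYX :: "real \<Rightarrow> real \<Rightarrow> real \<Rightarrow> real \<Rightarrow> real^3 \<Rightarrow> real^3^3" where
  "SaltYX A C H L p = mat 1 - (1 / (Yf A C H L p)$3) *\<^sub>R outer (Yf A C H L p - Xf A C H L p) e3"

definition monodromy :: "real \<Rightarrow> real \<Rightarrow> real \<Rightarrow> real \<Rightarrow> real^3 \<Rightarrow> real^3 \<Rightarrow> real \<Rightarrow> real \<Rightarrow> real^3^3" where
  "monodromy A C H L p0 p1 tX tY =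
     SaltYX A C H L p0 ** mexp (tY *\<^sub>R DY A C H) ** SaltXY A C H L p1 ** mexp (tX *\<^sub>R DX A C H)"

end

(* Both vector fields have Jacobian trace A + 2C, which vanishes for A = -2C, so by
   Liouville's formula det e^{tN} = e^{t tr N} the two flow matrices have determinant 1.
   Each saltation matrix is a rank-one perturbation I + u e3^T of the identity, with
   determinant 1 + u_3: the ratio of the normal components of the two fields at the
   crossing point. At p0 this is X_3/Y_3 = y0/x0, and at p1 it is Y_3/X_3 = (-y0)/(-x0). *)
theory Submission
  imports Defs
begin

lemma summable_vec_entrywise:
  fixes f :: "nat \<Rightarrow> 'a::real_normed_vector^'n"
  assumes "\<And>i. summable (\<lambda>n. f n $ i)"
  shows "summable f"
proof -
  have "(\<lambda>N. \<chi> i. \<Sum>n<N. f n $ i) \<longlonglongrightarrow> (\<chi> i. \<Sum>n. f n $ i)"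
    using assms by (intro tendsto_vec_lambda) (simp add: summable_LIMSEQ)
  moreover have "(\<lambda>N. \<chi> i. \<Sum>n<N. f n $ i) = (\<lambda>N. \<Sum>n<N. f n)"
    by (simp add: vec_eq_iff fun_eq_iff)
  ultimately show ?thesis
    unfolding summable_def sums_def by auto
qed

lemma mpow_scaleR: "mpow (t *\<^sub>R N) n = t ^ n *\<^sub>R mpow N n"
  by (induction n) (simp_all add: vec_eq_iff matrix_matrix_mult_def sum_distrib_left mult_ac)

lemma abs_mpow_entry_le:
  "\<bar>mpow N n $ i $ j\<bar> \<le> (\<Sum>a\<in>UNIV. \<Sum>b\<in>UNIV. \<bar>N $ a $ b\<bar>) ^ n"
proof (induction n arbitrary: i j)
  case 0
  then show ?case by (simp add: mat_def)
next
  case (Suc n)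
  define K where "K = (\<Sum>a\<in>UNIV. \<Sum>b\<in>UNIV. \<bar>N $ a $ b\<bar>)"
  have row_le: "(\<Sum>k\<in>UNIV. \<bar>N $ i $ k\<bar>) \<le> K"
    unfolding K_def
    by (rule member_le_sum[where f = "\<lambda>a. \<Sum>b\<in>UNIV. \<bar>N $ a $ b\<bar>"]) (auto intro: sum_nonneg)
  have "\<bar>mpow N (Suc n) $ i $ j\<bar> \<le> (\<Sum>k\<in>UNIV. \<bar>N $ i $ k\<bar> * \<bar>mpow N n $ k $ j\<bar>)"
    unfolding mpow.simps matrix_matrix_mult_def
    by (simp add: order_trans[OF sum_abs] abs_mult)
  also have "\<dots> \<le> (\<Sum>k\<in>UNIV. \<bar>N $ i $ k\<bar>) * K ^ n"
    using Suc.IH unfolding K_def sum_distrib_right by (intro sum_mono mult_left_mono) auto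
  also have "\<dots> \<le> K * K ^ n"
    using row_le by (rule mult_right_mono) (simp add: K_def sum_nonneg)
  finally show ?case
    by (simp add: K_def)
qed

lemma summable_mpow_entry_powser:
  "summable (\<lambda>n. mpow N n $ i $ j / fact n * t ^ n)"
proof (rule summable_comparison_test'[where N = 0, OF summable_exp])
  define K where "K = (\<Sum>a\<in>UNIV. \<Sum>b\<in>UNIV. \<bar>N $ a $ b\<bar>)"
  fix n
  have "norm (mpow N n $ i $ j / fact n * t ^ n) = inverse (fact n) * (\<bar>mpow N n $ i $ j\<bar> * \<bar>t\<bar> ^ n)"
    by (simp add: abs_mult power_abs divide_inverse)
  also have "\<dots> \<le> inverse (fact n) * (K ^ n * \<bar>t\<bar> ^ n)"
    unfolding K_def by (intro mult_left_mono mult_right_mono abs_mpow_entry_le) auto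
  finally show "norm (mpow N n $ i $ j / fact n * t ^ n) \<le> inverse (fact n) * (K * \<bar>t\<bar>) ^ n"
    by (simp add: power_mult_distrib)
qed

lemma mexp_scaleR_entry:
  "mexp (t *\<^sub>R N) $ i $ j = (\<Sum>n. mpow N n $ i $ j / fact n * t ^ n)"
proof -
  have "summable (\<lambda>n. (1 / fact n) *\<^sub>R mpow (t *\<^sub>R N) n)"
    using summable_mpow_entry_powser
    by (intro summable_vec_entrywise) (simp add: mpow_scaleR mult_ac)
  then have "(\<lambda>n. ((1 / fact n) *\<^sub>R mpow (t *\<^sub>R N) n) $ i $ j) sums (mexp (t *\<^sub>R N) $ i $ j)"
    unfolding mexp_def by (intro sums_vec_nth summable_sums)
  then show ?thesis
    by (simp add: sums_iff mpow_scaleR mult_ac)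
qed

lemma mexp_zero: "mexp 0 = mat 1"
proof -
  have "mexp (0 *\<^sub>R N) $ i $ j = mat 1 $ i $ j" for N i j
    unfolding mexp_scaleR_entry powser_zero by simp
  then show ?thesis
    by (simp add: vec_eq_iff)
qed

lemma has_real_derivative_mexp_entry:
  "((\<lambda>t. mexp (t *\<^sub>R N) $ i $ j) has_real_derivative (N ** mexp (t *\<^sub>R N)) $ i $ j) (at t)"
proof -
  let ?c = "\<lambda>i j n. mpow N n $ i $ j / fact n"
  have "diffs (?c i j) n * t ^ n = (\<Sum>k\<in>UNIV. N $ i $ k * (?c k j n * t ^ n))" for n
  proof -
    have "diffs (?c i j) n = mpow N (Suc n) $ i $ j / fact n"
      by (simp add: diffs_def del: mpow.simps of_nat_Suc)
    then show ?thesis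
      by (simp add: matrix_matrix_mult_def sum_divide_distrib sum_distrib_left mult_ac)
  qed
  then have "(\<Sum>n. diffs (?c i j) n * t ^ n) = (\<Sum>n. \<Sum>k\<in>UNIV. N $ i $ k * (?c k j n * t ^ n))"
    by simp
  also have "\<dots> = (\<Sum>k\<in>UNIV. \<Sum>n. N $ i $ k * (?c k j n * t ^ n))"
    by (intro suminf_sum summable_mult summable_mpow_entry_powser)
  also have "\<dots> = (N ** mexp (t *\<^sub>R N)) $ i $ j"
    unfolding matrix_matrix_mult_def vec_lambda_beta mexp_scaleR_entry
    by (intro sum.cong refl) (simp only: suminf_mult[OF summable_mpow_entry_powser])
  finally have "(\<Sum>n. diffs (?c i j) n * t ^ n) = (N ** mexp (t *\<^sub>R N)) $ i $ j" .
  moreover have "((\<lambda>t. \<Sum>n. ?c i j n * t ^ n) has_real_derivative (\<Sum>n. diffs (?c i j) n * t ^ n)) (at t)"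
    by (rule termdiffs_strong_converges_everywhere) (rule summable_mpow_entry_powser)
  ultimately show ?thesis
    unfolding mexp_scaleR_entry by simp
qed

lemma det_mexp_scaleR: "det (mexp (t *\<^sub>R N)) = exp (t * trace N)"
proof -
  define g where "g i j t = mexp (t *\<^sub>R N) $ i $ j" for i j t
  have g_deriv: "(g i j has_real_derivative N$i$1 * g 1 j t + N$i$2 * g 2 j t + N$i$3 * g 3 j t) (at t)"
    for i j t
    using has_real_derivative_mexp_entry[of N i j t]
    unfolding g_def by (simp add: matrix_matrix_mult_def sum_3)
  define f where "f t =
    g 1 1 t * g 2 2 t * g 3 3 t + g 1 2 t * g 2 3 t * g 3 1 t + g 1 3 t * g 2 1 t * g 3 2 t -
    g 1 1 t * g 2 3 t * g 3 2 t - g 1 2 t * g 2 1 t * g 3 3 t - g 1 3 t * g 2 2 t * g 3 1 t" for t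
  have det_eq: "det (mexp (t *\<^sub>R N)) = f t" for t
    by (simp add: det_3 f_def g_def)
  have f_deriv: "(f has_real_derivative trace N * f t) (at t)" for t
    unfolding f_def[abs_def] trace_def sum_3
    by ((rule derivative_eq_intros g_deriv refl)+, algebra)
  define h where "h t = f t * exp (- (t * trace N))" for t
  have "(h has_real_derivative 0) (at t)" for t
    unfolding h_def[abs_def]
    by (rule derivative_eq_intros f_deriv refl)+ (simp add: algebra_simps)
  then have "h t = h 0"
    by (blast intro: DERIV_isconst_all)
  also have "h 0 = 1"
    using det_eq[of 0] by (simp add: h_def mexp_zero)
  finally show ?thesis
    by (simp add: det_eq h_def exp_minus field_simps)
qed

lemma det_mat_1_plus_outer: "det (mat 1 + outer u v) = 1 + u \<bullet> (v :: real^3)"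
  by (simp add: det_3 outer_def mat_def inner_vec_def sum_3 algebra_simps)

lemma det_SaltXY:
  assumes "Xf A C H L p $ 3 \<noteq> 0"
  shows "det (SaltXY A C H L p) = Yf A C H L p $ 3 / Xf A C H L p $ 3"
proof -
  have "SaltXY A C H L p = mat 1 + outer ((1 / Xf A C H L p $ 3) *\<^sub>R (Yf A C H L p - Xf A C H L p)) e3"
    by (simp add: SaltXY_def outer_def vec_eq_iff)
  then show ?thesis
    using assms by (simp add: det_mat_1_plus_outer e3_def inner_axis field_simps)
qed

lemma det_SaltYX:
  assumes "Yf A C H L p $ 3 \<noteq> 0"
  shows "det (SaltYX A C H L p) = Xf A C H L p $ 3 / Yf A C H L p $ 3"
proof -
  have "SaltYX A C H L p = mat 1 + outer (- (1 / Yf A C H L p $ 3) *\<^sub>R (Yf A C H L p - Xf A C H L p)) e3"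
    by (simp add: SaltYX_def outer_def vec_eq_iff)
  then show ?thesis
    using assms by (simp add: det_mat_1_plus_outer e3_def inner_axis field_simps)
qed

lemma det_monodromy:
  assumes "Yf A C H L p0 $ 3 \<noteq> 0" and "Xf A C H L p1 $ 3 \<noteq> 0"
  shows "det (monodromy A C H L p0 p1 tX tY) =
    Xf A C H L p0 $ 3 / Yf A C H L p0 $ 3 * (Yf A C H L p1 $ 3 / Xf A C H L p1 $ 3)
      * exp ((tX + tY) * (A + 2 * C))"
proof -
  have "trace (DX A C H) = A + 2 * C" and "trace (DY A C H) = A + 2 * C"
    by (simp_all add: trace_def sum_3 DX_def DY_def)
  then show ?thesis
    using assms
    by (simp add: monodromy_def det_mul det_SaltXY det_SaltYX det_mexp_scaleR
        distrib_right exp_add mult_ac)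
qed

theorem mainTheorem9:
  fixes A C H L x0 y0 tX tY :: real and \<gamma>X \<gamma>Y :: "real \<Rightarrow> real^3"
  assumes "A \<noteq> 0" and "A = - 2 * C" and "x0 * y0 \<noteq> 0"
    and "tX > 0" and "tY > 0"
    and "\<And>t. t \<in> {0..tX} \<Longrightarrow>
           (\<gamma>X has_vector_derivative Xf A C H L (\<gamma>X t)) (at t within {0..tX})"
    and "\<And>t. t \<in> {0<..<tX} \<Longrightarrow> \<gamma>X t $ 3 > 0"
    and "\<gamma>X 0 = vector [x0, y0, 0]" and "\<gamma>X tX = vector [- y0, - x0, 0]"
    and "\<And>t. t \<in> {0..tY} \<Longrightarrow>
           (\<gamma>Y has_vector_derivative Yf A C H L (\<gamma>Y t)) (at t within {0..tY})"
    and "\<And>t. t \<in> {0<..<tY} \<Longrightarrow> \<gamma>Y t $ 3 < 0"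
    and "\<gamma>Y 0 = vector [- y0, - x0, 0]" and "\<gamma>Y tY = vector [x0, y0, 0]"
  shows "det (monodromy A C H L (vector [x0, y0, 0]) (vector [- y0, - x0, 0]) tX tY)
           = (y0 / x0)^2"
proof -
  have "x0 \<noteq> 0"
    using \<open>x0 * y0 \<noteq> 0\<close> by simp
  then show ?thesis
    using \<open>A = - 2 * C\<close> by (simp add: det_monodromy Xf_def Yf_def power2_eq_square)
qed

end
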